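(* Let $d$ and $m$ be positive integers with $m\ge 3$ and $m>2^{d-1}$. Let $w$ be a vertex of $\Gamma_m^*$ (defined below) with $\mathrm{d}((x_1,0),w)=d$ in $\Gamma_m^*$. Write $w=(x_{\beta_1}+\dots+x_{\beta_s},0)$ with $\beta_1<\dots<\beta_s$ (the unique expression of the first coordinate in the basis $x_1,\dots,x_m$). Then every index $n\in\{\beta_1,\dots,\beta_s\}$ satisfies $n\le 2^{d-1}+1$.
   Context: For an integer $m\ge 3$, let $V_m$ and $W_m$ be vector spaces over $\mathrm{GF}(2)$ of dimensions $m$ and $m-2$, with ordered bases $x_1,\dots,x_m$ and $y_1,\dots,y_{m-2}$ respectively. Let $f_m:V_m\times V_m\to W_m$ be the bilinear map determined on basis vectors by $f_m(x_i,x_j)=0$ if $j\in\{i,i+1\}$, $f_m(x_i,x_j)=y_{j-i-1}$ if $i+2\le j\le m$, and $f_m(x_i,x_j)=0$ if $i>j$. The group $H_m$ has underlying set $V_m\times W_m$ with multiplication $(a,b)\cdot(c,d)=(a+c,\ f_m(a,c)+b+d)$; its identity is $(0,0)$. The graph $\Gamma_m^*$ has as vertex set the non-identity elements of $X=\{(v,0)\mid v\in V_m\}$, two distinct vertices being adjacent if and only if they commute in $H_m$; $\mathrm{d}(\cdot,\cdot)$ denotes graph distance in $\Gamma_m^*$. *)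

theory Defs
  imports Main
begin

text \<open>Vectors of V_m = GF(2)^m with basis x_1..x_m are represented by their support
  (a subset of {1..m}); likewise vectors of W_m by subsets of {1..m-2}.
  Addition over GF(2) is symmetric difference.\<close>

definition gf2_add :: "nat set \<Rightarrow> nat set \<Rightarrow> nat set" where
  "gf2_add A B = (A - B) \<union> (B - A)"

definition Vm :: "nat \<Rightarrow> nat set set" where
  "Vm m = {A. A \<subseteq> {1..m}}"

definition fbasis :: "nat \<Rightarrow> nat \<Rightarrow> nat \<Rightarrow> nat set" where
  "fbasis m i j = (if i + 2 \<le> j \<and> j \<le> m then {j - i - 1} else {})"

text \<open>Bilinear extension over GF(2): coordinate y_k of f_m(a,c) is the parity of the number
  of pairs (i,j) with i in supp a, j in supp c whose basis value contains y_k.\<close>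
definition fm :: "nat \<Rightarrow> nat set \<Rightarrow> nat set \<Rightarrow> nat set" where
  "fm m A C = {k. odd (card {(i, j). i \<in> A \<and> j \<in> C \<and> k \<in> fbasis m i j})}"

definition Hmult :: "nat \<Rightarrow> nat set \<times> nat set \<Rightarrow> nat set \<times> nat set \<Rightarrow> nat set \<times> nat set" where
  "Hmult m p q = (gf2_add (fst p) (fst q), gf2_add (gf2_add (fm m (fst p) (fst q)) (snd p)) (snd q))"

definition Gamma_verts :: "nat \<Rightarrow> (nat set \<times> nat set) set" where
  "Gamma_verts m = {(v, {}) | v. v \<in> Vm m \<and> v \<noteq> {}}"

definition Gamma_adj :: "nat \<Rightarrow> nat set \<times> nat set \<Rightarrow> nat set \<times> nat set \<Rightarrow> bool" where
  "Gamma_adj m u v \<longleftrightarrow> u \<in> Gamma_verts m \<and> v \<in> Gamma_verts m \<and> u \<noteq> v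
      \<and> Hmult m u v = Hmult m v u"

definition graph_dist_is :: "('a \<Rightarrow> 'a \<Rightarrow> bool) \<Rightarrow> 'a \<Rightarrow> 'a \<Rightarrow> nat \<Rightarrow> bool" where
  "graph_dist_is adj u w n \<longleftrightarrow> (adj ^^ n) u w \<and> (\<forall>k<n. \<not> (adj ^^ k) u w)"

end

theory Submission
  imports Defs
begin

text \<open>If (a,0) and (c,0) commute then f(a,c) = f(c,a). Let p and i0 be the largest and smallest
  indices of a and Q the largest index of c. When Q \<ge> p + 2 and Q \<ge> 2p, the coordinate
  y_{Q-i0-1} of f(a,c) arises from the single pair (x_{i0}, x_Q), while f(c,a) only involves
  coordinates y_k with k \<le> p - 2 < Q - i0 - 1. Hence the largest index of a neighbour of a vertex
  with largest index p is at most max(2p - 1, p + 1), and along a walk of length d from x_1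
  all indices are at most 2^(d-1) + 1.\<close>

lemma mem_fbasis_iff: "k \<in> fbasis m i j \<longleftrightarrow> i + 2 \<le> j \<and> j \<le> m \<and> k = j - i - 1"
  unfolding fbasis_def by auto

lemma top_coordinate_mem_fm:
  assumes A: "finite A" "A \<noteq> {}" and C: "C \<subseteq> {..m}" and QC: "Max C \<in> C"
    and far: "Max A + 2 \<le> Max C"
  shows "Max C - Min A - 1 \<in> fm m A C"
proof -
  let ?k = "Max C - Min A - 1"
  have fC: "finite C" using C finite_subset by blast
  have "{(i, j). i \<in> A \<and> j \<in> C \<and> ?k \<in> fbasis m i j} = {(Min A, Max C)}"
  proof (intro set_eqI iffI; clarify)
    fix i j assume "i \<in> A" "j \<in> C" "?k \<in> fbasis m i j"
    moreover have "Min A \<le> i" "j \<le> Max C" using A fC \<open>i \<in> A\<close> \<open>j \<in> C\<close> by auto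
    moreover have "Min A \<le> Max A" using A by simp
    ultimately show "i = Min A \<and> j = Max C" using far by (auto simp: mem_fbasis_iff)
  next
    have "Min A \<le> Max A" using A by simp
    then have "Min A + 2 \<le> Max C" using far by linarith
    moreover have "Max C \<le> m" using C QC by auto
    ultimately show "Min A \<in> A \<and> Max C \<in> C \<and> ?k \<in> fbasis m (Min A) (Max C)"
      using A QC by (simp add: mem_fbasis_iff)
  qed
  then show ?thesis unfolding fm_def by simp
qed

lemma top_coordinate_not_mem_fm:
  assumes A: "finite A" "A \<noteq> {}" and C: "C \<subseteq> {1..}"
    and far: "2 * Max A \<le> Q"
  shows "Q - Min A - 1 \<notin> fm m C A"
proof -
  have none: "{(i, j). i \<in> C \<and> j \<in> A \<and> Q - Min A - 1 \<in> fbasis m i j} = {}"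
  proof (intro equals0I; clarify)
    fix i j assume "i \<in> C" "j \<in> A" "Q - Min A - 1 \<in> fbasis m i j"
    moreover have "Min A \<le> Max A" "j \<le> Max A" using A \<open>j \<in> A\<close> by auto
    ultimately show False using C far by (auto simp: mem_fbasis_iff)
  qed
  show ?thesis unfolding fm_def by (simp only: mem_Collect_eq none card.empty) simp
qed

lemma commuting_support_bound:
  assumes A: "A \<subseteq> {1..m}" "A \<noteq> {}" and C: "C \<subseteq> {1..m}"
    and comm: "fm m A C = fm m C A" and q: "q \<in> C"
  shows "q \<le> max (2 * Max A - 1) (Max A + 1)"
proof (rule ccontr)
  assume "\<not> ?thesis"
  moreover have fin: "finite A" "finite C" using A C finite_subset by auto
  moreover have "q \<le> Max C" "Max C \<in> C" using fin(2) q by (auto intro: Max_in)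
  ultimately have "Max A + 2 \<le> Max C" "2 * Max A \<le> Max C" by auto
  moreover have "C \<subseteq> {..m}" "C \<subseteq> {1..}" using C by auto
  ultimately have "Max C - Min A - 1 \<in> fm m A C" "Max C - Min A - 1 \<notin> fm m C A"
    using top_coordinate_mem_fm[OF fin(1) A(2) _ \<open>Max C \<in> C\<close>]
      top_coordinate_not_mem_fm[OF fin(1) A(2)] by blast+
  then show False using comm by simp
qed

lemma Gamma_adj_support_bound:
  assumes "Gamma_adj m v w" and "q \<in> fst w"
  shows "q \<le> max (2 * Max (fst v) - 1) (Max (fst v) + 1)"
proof -
  have "fst v \<subseteq> {1..m}" "fst v \<noteq> {}" "fst w \<subseteq> {1..m}"
    "fm m (fst v) (fst w) = fm m (fst w) (fst v)"
    using assms(1) unfolding Gamma_adj_def Gamma_verts_def Vm_def Hmult_def gf2_add_def by auto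
  then show ?thesis using commuting_support_bound assms(2) by blast
qed

lemma walk_support_bound:
  assumes "(Gamma_adj m ^^ n) ({1}, {}) w" and "n \<ge> 1"
  shows "fst w \<subseteq> {..2 ^ (n - 1) + 1}"
  using assms(2,1)
proof (induction n arbitrary: w rule: nat_induct_at_least)
  case base
  then have "Gamma_adj m ({1}, {}) w" by (simp only: relpowp_1)
  then show ?case using Gamma_adj_support_bound by fastforce
next
  case (Suc n)
  then obtain v where v: "(Gamma_adj m ^^ n) ({1}, {}) v" "Gamma_adj m v w" by auto
  have "fst v \<noteq> {}" "fst v \<subseteq> {1..m}"
    using v(2) unfolding Gamma_adj_def Gamma_verts_def Vm_def by auto
  then have "Max (fst v) \<le> 2 ^ (n - 1) + 1"
    using Suc.IH[OF v(1)] finite_subset[of "fst v" "{1..m}"] by auto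
  moreover have "(2::nat) ^ n = 2 * 2 ^ (n - 1)" using \<open>n \<ge> 1\<close> by (cases n) simp_all
  moreover have "(1::nat) \<le> 2 ^ (n - 1)" by simp
  ultimately have "max (2 * Max (fst v) - 1) (Max (fst v) + 1) \<le> 2 ^ n + 1"
    by linarith
  then show ?case using Gamma_adj_support_bound[OF v(2)] by fastforce
qed

theorem lemma2p3:
  fixes d m :: nat and w :: "nat set \<times> nat set"
  assumes "d \<ge> 1" and "m \<ge> 3" and "m > 2 ^ (d - 1)"
    and "w \<in> Gamma_verts m"
    and "graph_dist_is (Gamma_adj m) ({1}, {}) w d"
  shows "\<forall>n \<in> fst w. n \<le> 2 ^ (d - 1) + 1"
  using walk_support_bound assms(1,5) unfolding graph_dist_is_def by blast

end
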